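(* Let $\alpha=1/2$. (i) For every $(x,y)\in[0,1]^2$ with $x+y\ge 1$ we have $G_{1/2}(x,y)=(y,2-x-y)$, $G_{1/2}^2(x,y)=(2-x-y,x)$ and $G_{1/2}^3(x,y)=(x,y)$; in particular every such point is periodic with period $3$ except the fixed point $(2/3,2/3)$. The only fixed points of $G_{1/2}$ in $[0,1]^2$ are $(0,0)$ and $(2/3,2/3)$. (ii) For every $(x,y)\in[0,1]^2\setminus\{(0,0)\}$ there is $n\ge 0$ such that $G_{1/2}^n(x,y)=(u,v)$ satisfies $u+v\ge 1$; hence every point other than $(0,0)$ is periodic of period $3$, or fixed, or eventually periodic of period $3$ or eventually fixed.
   Context: Let $\tau:[0,1]\to[0,1]$ be the symmetric tent map, $\tau(x)=2x$ for $0\le x<1/2$ and $\tau(x)=2-2x$ for $1/2\le x\le 1$. For $0<\alpha<1$ define $G_\alpha:[0,1]^2\to[0,1]^2$ by $G_\alpha(x,y)=(y,\tau(\alpha y+(1-\alpha)x))$. *)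

theory Defs
  imports Complex_Main
begin

definition tent :: "real \<Rightarrow> real" where
  "tent x = (if x < 1/2 then 2 * x else 2 - 2 * x)"

definition G :: "real \<Rightarrow> real \<times> real \<Rightarrow> real \<times> real" where
  "G \<alpha> p = (snd p, tent (\<alpha> * snd p + (1 - \<alpha>) * fst p))"

definition unit_square :: "(real \<times> real) set" where
  "unit_square = {0..1} \<times> {0..1}"

end

theory Submission
  imports Defs
begin

text \<open>For \<open>\<alpha> = 1/2\<close> the map is \<open>(x, y) \<mapsto> (y, x + y)\<close> below the antidiagonal \<open>x + y = 1\<close>
  and the rotation \<open>(x, y) \<mapsto> (y, 2 - x - y)\<close> of order 3 about \<open>(2/3, 2/3)\<close> on the triangle
  above it, which it preserves. Below the antidiagonal the second coordinate never decreases and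
  becomes \<open>x + y > 0\<close> after one step, so the coordinate sum grows by at least \<open>x + y\<close> per step
  until the orbit enters the triangle.\<close>

lemma tent_fixed_iff: "tent x = x \<longleftrightarrow> x = 0 \<or> x = 2/3"
  by (auto simp: tent_def)

lemma tent_in_unit_interval: "x \<in> {0..1} \<Longrightarrow> tent x \<in> {0..1}"
  by (auto simp: tent_def)

lemma G_fixed_iff: "G \<alpha> (x, y) = (x, y) \<longleftrightarrow> x = y \<and> tent y = y"
  by (auto simp: G_def algebra_simps)

lemma fixed_points_G: "{p \<in> unit_square. G \<alpha> p = p} = {(0, 0), (2/3, 2/3)}"
proof -
  have "G \<alpha> (x, y) = (x, y) \<longleftrightarrow> (x, y) \<in> {(0, 0), (2/3, 2/3)}" for x y
    unfolding G_fixed_iff tent_fixed_iff by auto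
  then show ?thesis
    by (auto simp: unit_square_def)
qed

lemma G_in_unit_square:
  assumes "\<alpha> \<in> {0..1}" "p \<in> unit_square"
  shows "G \<alpha> p \<in> unit_square"
proof -
  obtain x y where p: "p = (x, y)" and xy: "x \<in> {0..1}" "y \<in> {0..1}"
    using assms(2) by (auto simp: unit_square_def)
  have "\<alpha> * y + (1 - \<alpha>) * x \<le> 1"
    using convex_bound_le[of y 1 x \<alpha> "1 - \<alpha>"] assms(1) xy by simp
  moreover have "0 \<le> \<alpha> * y + (1 - \<alpha>) * x"
    using assms(1) xy by simp
  ultimately show ?thesis
    using xy tent_in_unit_interval by (simp add: p G_def unit_square_def)
qed

lemma funpow_G_in_unit_square:
  "\<alpha> \<in> {0..1} \<Longrightarrow> p \<in> unit_square \<Longrightarrow> (G \<alpha> ^^ n) p \<in> unit_square"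
  by (induction n) (simp_all add: G_in_unit_square)

lemma G_half_below: "x + y < 1 \<Longrightarrow> G (1/2) (x, y) = (y, x + y)"
  by (simp add: G_def tent_def)

lemma G_half_above:
  "(x, y) \<in> unit_square \<Longrightarrow> 1 \<le> x + y \<Longrightarrow> G (1/2) (x, y) = (y, 2 - x - y)"
  by (simp add: G_def tent_def unit_square_def)

lemma rotation_preserves_upper_triangle:
  assumes "(x, y) \<in> unit_square" "1 \<le> x + y"
  shows "(y, 2 - x - y) \<in> unit_square" and "1 \<le> y + (2 - x - y)"
  using assms by (auto simp: unit_square_def)

lemma G_half_upper_triangle_orbit:
  assumes "(x, y) \<in> unit_square" "1 \<le> x + y"
  shows "G (1/2) (x, y) = (y, 2 - x - y)"
    and "(G (1/2) ^^ 2) (x, y) = (2 - x - y, x)"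
    and "(G (1/2) ^^ 3) (x, y) = (x, y)"
proof -
  show step1: "G (1/2) (x, y) = (y, 2 - x - y)"
    using assms by (rule G_half_above)
  have step2: "G (1/2) (y, 2 - x - y) = (2 - x - y, x)"
    using rotation_preserves_upper_triangle[OF assms] by (simp add: G_half_above)
  have step3: "G (1/2) (2 - x - y, x) = (x, y)"
    using rotation_preserves_upper_triangle[OF rotation_preserves_upper_triangle[OF assms]]
    by (simp add: G_half_above)
  show "(G (1/2) ^^ 2) (x, y) = (2 - x - y, x)"
    using step1 step2 by (simp add: numeral_2_eq_2)
  show "(G (1/2) ^^ 3) (x, y) = (x, y)"
    using step1 step2 step3 by (simp add: eval_nat_numeral)
qed

lemma G_half_upper_triangle_period_3:
  assumes "(x, y) \<in> unit_square" "1 \<le> x + y" "(x, y) \<noteq> (2/3, 2/3)"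
  shows "G (1/2) (x, y) \<noteq> (x, y)" and "(G (1/2) ^^ 2) (x, y) \<noteq> (x, y)"
  using assms(3) G_half_upper_triangle_orbit[OF assms(1,2)] by auto

lemma G_half_reaches_upper_triangle_within:
  assumes "0 < c" "0 \<le> a" "c \<le> b" "1 \<le> a + b + real k * c"
  shows "\<exists>n. 1 \<le> fst ((G (1/2) ^^ n) (a, b)) + snd ((G (1/2) ^^ n) (a, b))"
  using assms(2-)
proof (induction k arbitrary: a b)
  case 0
  then show ?case by (intro exI[of _ 0]) simp
next
  case (Suc k)
  show ?case
  proof (cases "1 \<le> a + b")
    case True
    then show ?thesis by (intro exI[of _ 0]) simp
  next
    case False
    have "0 \<le> b" "c \<le> a + b" "1 \<le> b + (a + b) + real k * c"
      using assms(1) Suc.prems by (simp_all add: algebra_simps)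
    then obtain n where "1 \<le> fst ((G (1/2) ^^ n) (b, a + b)) + snd ((G (1/2) ^^ n) (b, a + b))"
      using Suc.IH by blast
    moreover have "G (1/2) (a, b) = (b, a + b)"
      using False by (simp add: G_half_below)
    ultimately show ?thesis
      by (metis funpow_Suc_right o_apply)
  qed
qed

lemma G_half_reaches_upper_triangle:
  assumes "p \<in> unit_square - {(0, 0)}"
  shows "\<exists>n. 1 \<le> fst ((G (1/2) ^^ n) p) + snd ((G (1/2) ^^ n) p)"
proof -
  obtain x y where p: "p = (x, y)" by (cases p)
  have xy: "0 \<le> x" "0 \<le> y" "0 < x + y"
    using assms by (auto simp: p unit_square_def add_pos_nonneg)
  show ?thesis
  proof (cases "1 \<le> x + y")
    case True
    then show ?thesis by (intro exI[of _ 0]) (simp add: p)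
  next
    case False
    obtain k where "1 / (x + y) < real k"
      using reals_Archimedean2 by blast
    then have "1 \<le> y + (x + y) + real k * (x + y)"
      using xy by (simp add: field_simps)
    then obtain n where "1 \<le> fst ((G (1/2) ^^ n) (y, x + y)) + snd ((G (1/2) ^^ n) (y, x + y))"
      using G_half_reaches_upper_triangle_within[of "x + y" y "x + y"] xy by auto
    moreover have "G (1/2) (x, y) = (y, x + y)"
      using False by (simp add: G_half_below)
    ultimately show ?thesis
      by (metis p funpow_Suc_right o_apply)
  qed
qed

lemma G_half_eventually_fixed_or_period_3:
  assumes "p \<in> unit_square - {(0, 0)}"
  shows "\<exists>n. let q = (G (1/2) ^^ n) p in
           G (1/2) q = q \<or> ((G (1/2) ^^ 3) q = q \<and> G (1/2) q \<noteq> q \<and> (G (1/2) ^^ 2) q \<noteq> q)"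
proof -
  obtain n where n: "1 \<le> fst ((G (1/2) ^^ n) p) + snd ((G (1/2) ^^ n) p)"
    using G_half_reaches_upper_triangle[OF assms] by blast
  obtain x y where q: "(G (1/2) ^^ n) p = (x, y)"
    by (cases "(G (1/2) ^^ n) p")
  have "(x, y) \<in> unit_square"
    using funpow_G_in_unit_square[of "1/2" p n] assms q by simp
  moreover have "1 \<le> x + y"
    using n q by simp
  ultimately have "G (1/2) (x, y) = (x, y) \<or>
      ((G (1/2) ^^ 3) (x, y) = (x, y) \<and> G (1/2) (x, y) \<noteq> (x, y) \<and> (G (1/2) ^^ 2) (x, y) \<noteq> (x, y))"
  proof (cases "(x, y) = (2/3, 2/3)")
    case True
    then show ?thesis by (simp add: G_fixed_iff tent_fixed_iff)
  next
    case False
    then show ?thesis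
      using G_half_upper_triangle_orbit(3) G_half_upper_triangle_period_3
        \<open>(x, y) \<in> unit_square\<close> \<open>1 \<le> x + y\<close> by blast
  qed
  then show ?thesis
    by (intro exI[of _ n]) (simp add: q Let_def)
qed

theorem mainTheorem5:
  shows "(\<forall>x y. (x, y) \<in> unit_square \<and> x + y \<ge> 1 \<longrightarrow>
            G (1/2) (x, y) = (y, 2 - x - y) \<and>
            (G (1/2) ^^ 2) (x, y) = (2 - x - y, x) \<and>
            (G (1/2) ^^ 3) (x, y) = (x, y) \<and>
            ((x, y) \<noteq> (2/3, 2/3) \<longrightarrow>
               G (1/2) (x, y) \<noteq> (x, y) \<and> (G (1/2) ^^ 2) (x, y) \<noteq> (x, y)))
       \<and> {p \<in> unit_square. G (1/2) p = p} = {(0, 0), (2/3, 2/3)}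
       \<and> (\<forall>p \<in> unit_square - {(0, 0)}.
            (\<exists>n. fst ((G (1/2) ^^ n) p) + snd ((G (1/2) ^^ n) p) \<ge> 1) \<and>
            (\<exists>n. let q = (G (1/2) ^^ n) p in
                  G (1/2) q = q \<or>
                  ((G (1/2) ^^ 3) q = q \<and> G (1/2) q \<noteq> q \<and> (G (1/2) ^^ 2) q \<noteq> q)))"
proof (intro conjI allI impI ballI)
  fix x y :: real
  assume "(x, y) \<in> unit_square \<and> 1 \<le> x + y"
  then show "G (1/2) (x, y) = (y, 2 - x - y)" "(G (1/2) ^^ 2) (x, y) = (2 - x - y, x)"
    "(G (1/2) ^^ 3) (x, y) = (x, y)"
    and "(x, y) \<noteq> (2/3, 2/3) \<Longrightarrow> G (1/2) (x, y) \<noteq> (x, y)"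
    and "(x, y) \<noteq> (2/3, 2/3) \<Longrightarrow> (G (1/2) ^^ 2) (x, y) \<noteq> (x, y)"
    using G_half_upper_triangle_orbit G_half_upper_triangle_period_3 by blast+
qed (simp_all add: fixed_points_G G_half_reaches_upper_triangle G_half_eventually_fixed_or_period_3)

end
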